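(* Let $G$ be a graph and let $\mathcal{C}$ be a packing of $K_4(G)$ (i.e., a collection of pairwise vertex-disjoint vertex sets each inducing a complete graph on $4$ vertices in $G$), and write $V(\mathcal{C})$ for the union of the sets in $\mathcal{C}$. Let $\rho\ge 1$ and let $S$ be a $\rho$-approximation solution for \textsc{Bipartization} on $G-V(\mathcal{C})$, i.e., $S$ is an odd cycle transversal of $G-V(\mathcal{C})$ of size at most $\rho$ times the minimum size of an odd cycle transversal of $G-V(\mathcal{C})$. Then $S\cup V(\mathcal{C})$ is a $\max\{2,\rho\}$-approximation solution for \textsc{Bipartization} on $G$, i.e., it is an odd cycle transversal of $G$ of size at most $\max\{2,\rho\}$ times the minimum size of an odd cycle transversal of $G$.
   Context: An odd cycle transversal of a graph $G$ is a set $S\subseteq V(G)$ such that $G-S$ is bipartite. $K_4(G)$ denotes the family of vertex sets of copies of $K_4$ in $G$; a packing of a family of sets is a subfamily of pairwise disjoint sets. *)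

theory Defs
  imports Complex_Main
begin

definition graph :: "'a set \<Rightarrow> 'a set set \<Rightarrow> bool" where
  "graph V E \<longleftrightarrow> finite V \<and> (\<forall>e\<in>E. e \<subseteq> V \<and> card e = 2)"

text \<open>Edges of G - X (vertex deletion): vertex set is V - X.\<close>
definition del_edges :: "'a set set \<Rightarrow> 'a set \<Rightarrow> 'a set set" where
  "del_edges E X = {e \<in> E. e \<inter> X = {}}"

definition bipartite :: "'a set \<Rightarrow> 'a set set \<Rightarrow> bool" where
  "bipartite V E \<longleftrightarrow> (\<exists>A \<subseteq> V. \<forall>e\<in>E. card (e \<inter> A) = 1)"

definition oct :: "'a set \<Rightarrow> 'a set set \<Rightarrow> 'a set \<Rightarrow> bool" where
  "oct V E S \<longleftrightarrow> S \<subseteq> V \<and> bipartite (V - S) (del_edges E S)"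

definition oct_num :: "'a set \<Rightarrow> 'a set set \<Rightarrow> nat" where
  "oct_num V E = Min {card S | S. oct V E S}"

definition K4 :: "'a set \<Rightarrow> 'a set set \<Rightarrow> 'a set set" where
  "K4 V E = {K. K \<subseteq> V \<and> card K = 4 \<and> (\<forall>u\<in>K. \<forall>v\<in>K. u \<noteq> v \<longrightarrow> {u, v} \<in> E)}"

definition packing :: "'a set set \<Rightarrow> 'a set set \<Rightarrow> bool" where
  "packing \<F> \<C> \<longleftrightarrow> \<C> \<subseteq> \<F> \<and> (\<forall>X\<in>\<C>. \<forall>Y\<in>\<C>. X \<noteq> Y \<longrightarrow> X \<inter> Y = {})"

end

theory Submission
  imports Defs
begin

text \<open>Every odd cycle transversal T of G contains at least two vertices of each copy of K4,
  since otherwise three vertices of that copy survive in G - T and span a triangle. An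
  optimal T therefore splits into T - V(C), an odd cycle transversal of G - V(C) and hence
  of size at least card S / \<rho>, and T \<inter> V(C), which by disjointness of the packing
  has size at least half of card V(C).\<close>

lemma card_Int_doubleton_eq_1:
  "a \<noteq> b \<Longrightarrow> card ({a, b} \<inter> A) = 1 \<longleftrightarrow> (a \<in> A \<longleftrightarrow> b \<notin> A)"
  by (cases "a \<in> A"; cases "b \<in> A") auto

lemma bipartite_no_triangle:
  assumes "bipartite V E" and "{a, b} \<in> E" "{b, c} \<in> E" "{a, c} \<in> E"
    and "a \<noteq> b" "b \<noteq> c" "a \<noteq> c"
  shows False
proof -
  obtain A where "\<forall>e\<in>E. card (e \<inter> A) = 1"
    using assms(1) by (auto simp: bipartite_def)
  with assms(2-4) have "card ({a, b} \<inter> A) = 1" "card ({b, c} \<inter> A) = 1" "card ({a, c} \<inter> A) = 1"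
    by blast+
  with assms(5-) have "a \<in> A \<longleftrightarrow> b \<notin> A" "b \<in> A \<longleftrightarrow> c \<notin> A" "a \<in> A \<longleftrightarrow> c \<notin> A"
    using card_Int_doubleton_eq_1 by metis+
  then show False by blast
qed

lemma bipartite_subgraph:
  assumes "bipartite V E" "E' \<subseteq> E" "\<forall>e\<in>E'. e \<subseteq> V'"
  shows "bipartite V' E'"
proof -
  obtain A where A: "\<forall>e\<in>E. card (e \<inter> A) = 1"
    using assms(1) by (auto simp: bipartite_def)
  have "\<forall>e\<in>E'. card (e \<inter> (A \<inter> V')) = 1"
  proof
    fix e assume "e \<in> E'"
    with assms(2,3) A have "e \<inter> (A \<inter> V') = e \<inter> A" "card (e \<inter> A) = 1" by auto
    then show "card (e \<inter> (A \<inter> V')) = 1" by simp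
  qed
  then show ?thesis unfolding bipartite_def by blast
qed

lemma del_edges_del_edges: "del_edges (del_edges E X) Y = del_edges E (X \<union> Y)"
  by (auto simp: del_edges_def)

lemma oct_Un_deleted:
  assumes "oct (V - X) (del_edges E X) S" and "X \<subseteq> V"
  shows "oct V E (S \<union> X)"
proof -
  have "V - (S \<union> X) = V - X - S" by auto
  moreover have "del_edges E (S \<union> X) = del_edges (del_edges E X) S"
    by (simp add: del_edges_del_edges Un_commute)
  ultimately show ?thesis using assms by (auto simp: oct_def)
qed

lemma oct_Diff_deleted:
  assumes "graph V E" and "oct V E T"
  shows "oct (V - X) (del_edges E X) (T - X)"
proof -
  have "bipartite (V - T) (del_edges E T)" using assms(2) by (simp add: oct_def)
  then have "bipartite (V - X - (T - X)) (del_edges (del_edges E X) (T - X))"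
    by (rule bipartite_subgraph) (use assms(1) in \<open>auto simp: del_edges_def graph_def\<close>)
  then show ?thesis using assms(2) by (auto simp: oct_def)
qed

lemma finite_oct_cards: "finite V \<Longrightarrow> finite {card S | S. oct V E S}"
proof -
  assume "finite V"
  moreover have "{card S | S. oct V E S} \<subseteq> card ` Pow V" by (auto simp: oct_def)
  ultimately show ?thesis by (meson finite_Pow_iff finite_imageI finite_subset)
qed

lemma oct_num_le:
  assumes "finite V" and "oct V E S"
  shows "oct_num V E \<le> card S"
  unfolding oct_num_def using assms finite_oct_cards by (intro Min_le) auto

lemma oct_num_attained:
  assumes "finite V" and "oct V E S"
  obtains T where "oct V E T" and "card T = oct_num V E"
proof -
  have "oct_num V E \<in> {card S | S. oct V E S}"
    unfolding oct_num_def using assms finite_oct_cards by (intro Min_in) auto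
  then show ?thesis using that by auto
qed

lemma add_le_max_mult_add:
  fixes a b u v x y :: "'a :: linordered_semiring"
  assumes "x \<le> a * u" "y \<le> b * v" "0 \<le> u" "0 \<le> v"
  shows "x + y \<le> max a b * (u + v)"
proof -
  have "a * u \<le> max a b * u" "b * v \<le> max a b * v"
    using assms(3,4) by (simp_all add: mult_right_mono)
  with assms(1,2) have "x + y \<le> max a b * u + max a b * v"
    by (meson add_mono order_trans)
  then show ?thesis by (simp add: distrib_left)
qed

lemma K4_Int_oct_card_ge_2:
  assumes K: "K \<in> K4 V E" and T: "oct V E T"
  shows "2 \<le> card (K \<inter> T)"
proof (rule ccontr)
  assume "\<not> 2 \<le> card (K \<inter> T)"
  moreover have "card K = 4" and "finite K"
    using K by (auto simp: K4_def intro: card_ge_0_finite)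
  ultimately have "3 \<le> card (K - T)" using card_Int_Diff[of K T] by linarith
  then obtain B where "B \<subseteq> K - T" "card B = 3" by (meson obtain_subset_with_card_n)
  then obtain a b c where abc: "{a, b, c} \<subseteq> K - T" "a \<noteq> b" "b \<noteq> c" "a \<noteq> c"
    by (auto simp: card_3_iff)
  have "\<forall>u\<in>K. \<forall>v\<in>K. u \<noteq> v \<longrightarrow> {u, v} \<in> E" using K by (simp add: K4_def)
  with abc have "{a, b} \<in> del_edges E T" "{b, c} \<in> del_edges E T" "{a, c} \<in> del_edges E T"
    by (auto simp: del_edges_def)
  moreover have "bipartite (V - T) (del_edges E T)" using T by (simp add: oct_def)
  ultimately show False using abc(2-) bipartite_no_triangle by metis
qed

lemma card_Union_K4_packing_le:
  assumes "finite V" and "packing (K4 V E) \<C>" and "oct V E T"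
  shows "card (\<Union>\<C>) \<le> 2 * card (T \<inter> \<Union>\<C>)"
proof -
  have K4: "\<C> \<subseteq> K4 V E" and disj: "\<forall>X\<in>\<C>. \<forall>Y\<in>\<C>. X \<noteq> Y \<longrightarrow> X \<inter> Y = {}"
    using assms(2) by (auto simp: packing_def)
  have "\<Union>\<C> \<subseteq> V" and card4: "\<forall>K\<in>\<C>. card K = 4"
    using K4 by (auto simp: K4_def)
  then have "finite \<C>" and fin: "\<forall>K\<in>\<C>. finite K"
    using assms(1) by (meson finite_UnionD finite_subset, meson Sup_upper finite_subset subset_trans)
  have "card (\<Union>\<C>) = (\<Sum>K\<in>\<C>. card K)"
    using card_UN_disjoint[OF \<open>finite \<C>\<close>, of id] fin disj by simp
  also have "\<dots> \<le> (\<Sum>K\<in>\<C>. 2 * card (K \<inter> T))"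
    using K4 card4 assms(3) K4_Int_oct_card_ge_2 by (intro sum_mono) fastforce
  also have "\<dots> = 2 * card (\<Union>K\<in>\<C>. K \<inter> T)"
    using fin disj by (subst card_UN_disjoint[OF \<open>finite \<C>\<close>]) (auto simp: sum_distrib_left)
  also have "(\<Union>K\<in>\<C>. K \<inter> T) = T \<inter> \<Union>\<C>" by auto
  finally show ?thesis .
qed

theorem lemma4:
  fixes V :: "'a set" and E :: "'a set set" and \<C> :: "'a set set"
    and S :: "'a set" and \<rho> :: real
  assumes "graph V E"
    and "packing (K4 V E) \<C>"
    and "\<rho> \<ge> 1"
    and "oct (V - \<Union>\<C>) (del_edges E (\<Union>\<C>)) S"
    and "real (card S) \<le> \<rho> * real (oct_num (V - \<Union>\<C>) (del_edges E (\<Union>\<C>)))"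
  shows "oct V E (S \<union> \<Union>\<C>)
     \<and> real (card (S \<union> \<Union>\<C>)) \<le> max 2 \<rho> * real (oct_num V E)"
proof -
  let ?U = "\<Union>\<C>"
  have "finite V" using assms(1) by (simp add: graph_def)
  have "?U \<subseteq> V" using assms(2) by (auto simp: packing_def K4_def)
  with assms(4) have oct_SU: "oct V E (S \<union> ?U)" by (rule oct_Un_deleted)
  with \<open>finite V\<close> obtain T where T: "oct V E T" "card T = oct_num V E"
    by (rule oct_num_attained)
  have "finite T" using T(1) \<open>finite V\<close> by (auto simp: oct_def intro: finite_subset)
  have "oct_num (V - ?U) (del_edges E ?U) \<le> card (T - ?U)"
    using \<open>finite V\<close> oct_Diff_deleted[OF assms(1) T(1)] by (intro oct_num_le) auto
  then have S_le: "real (card S) \<le> \<rho> * real (card (T - ?U))"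
    using assms(3,5) by (meson mult_left_mono of_nat_mono order_trans zero_le_one)
  have U_le: "real (card ?U) \<le> 2 * real (card (T \<inter> ?U))"
    using card_Union_K4_packing_le[OF \<open>finite V\<close> assms(2) T(1)] by linarith
  have "real (card (S \<union> ?U)) \<le> real (card S) + real (card ?U)"
    using card_Un_le[of S ?U] by linarith
  also have "\<dots> \<le> max \<rho> 2 * (real (card (T - ?U)) + real (card (T \<inter> ?U)))"
    using S_le U_le by (intro add_le_max_mult_add) simp_all
  also have "real (card (T - ?U)) + real (card (T \<inter> ?U)) = real (oct_num V E)"
    using T(2) card_Int_Diff[OF \<open>finite T\<close>, of ?U] by simp
  finally show ?thesis using oct_SU by (simp add: max.commute)
qed

end
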